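(* Let $\Gamma$ be a graph. Then $\Gamma$ is strongly shortcut as a graph if and only if $\Gamma$ does not approximate $n$-gons.
   Context: Graphs are geodesic metric spaces with each edge isometric to the unit interval. The cycle graph $S_n$ is the graph isometric to a Riemannian circle of length $n$; a cycle in $\Gamma$ is a combinatorial map $\alpha\colon S_n\to\Gamma$; for $K>1$ it is $\frac1K$-almost isometric if $d(\alpha(p),\alpha(\bar p))\ge\frac1K\cdot\frac n2$ for all antipodal $p,\bar p\in S_n$. $\Gamma$ is strongly shortcut as a graph if for some $K>1$ there is a bound on the lengths of its $\frac1K$-almost isometric cycles. $S_n^0$ is the vertex set of $S_n$ with the induced metric and $\lambda S_n^0$ is it with the metric scaled by $\lambda>0$. A metric space $X$ approximates $n$-gons if for every $K>1$ and every $n\in\mathbb N$ there exist $K$-bilipschitz embeddings $\lambda S_n^0\to X$ for arbitrarily large $\lambda>0$. *)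

theory Defs
  imports Complex_Main
begin

definition is_graph :: "('a \<Rightarrow> 'a \<Rightarrow> bool) \<Rightarrow> bool" where
  "is_graph E \<longleftrightarrow> (\<forall>u v. E u v \<longrightarrow> E v u) \<and> (\<forall>u. \<not> E u u)"

definition is_walk :: "('a \<Rightarrow> 'a \<Rightarrow> bool) \<Rightarrow> nat \<Rightarrow> (nat \<Rightarrow> 'a) \<Rightarrow> bool" where
  "is_walk E n w \<longleftrightarrow> (\<forall>i<n. E (w i) (w (Suc i)))"

definition connected_graph :: "('a \<Rightarrow> 'a \<Rightarrow> bool) \<Rightarrow> bool" where
  "connected_graph E \<longleftrightarrow> (\<forall>u v. \<exists>n w. is_walk E n w \<and> w 0 = u \<and> w n = v)"

definition gdist :: "('a \<Rightarrow> 'a \<Rightarrow> bool) \<Rightarrow> 'a \<Rightarrow> 'a \<Rightarrow> real" where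
  "gdist E u v = real (LEAST n. \<exists>w. is_walk E n w \<and> w 0 = u \<and> w n = v)"

text \<open>Points of the geometric realisation: a triple (u, v, s) is the point at
distance s from u on the edge uv (0 \<le> s \<le> 1); a vertex u is also represented as
(u, u, 0).  Representations are not unique; the distance below identifies them.\<close>
type_synonym 'a gpoint = "'a \<times> 'a \<times> real"

definition gpoints :: "('a \<Rightarrow> 'a \<Rightarrow> bool) \<Rightarrow> 'a gpoint set" where
  "gpoints E = {(u, v, s). (E u v \<and> 0 \<le> s \<and> s \<le> 1) \<or> (u = v \<and> s = 0)}"

text \<open>Distance in the realisation: either inside a common edge, or leaving through
an endpoint of each edge and travelling along a shortest combinatorial path.\<close>
definition gpdist :: "('a \<Rightarrow> 'a \<Rightarrow> bool) \<Rightarrow> 'a gpoint \<Rightarrow> 'a gpoint \<Rightarrow> real" where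
  "gpdist E p q = (case p of (u, v, s) \<Rightarrow> case q of (u', v', t) \<Rightarrow>
     let via = Min {s + gdist E u u' + t, s + gdist E u v' + (1 - t),
                    (1 - s) + gdist E v u' + t, (1 - s) + gdist E v v' + (1 - t)}
     in if u \<noteq> v \<and> u = u' \<and> v = v' then min \<bar>s - t\<bar> via
        else if u \<noteq> v \<and> u = v' \<and> v = u' then min \<bar>s - (1 - t)\<bar> via
        else via)"

text \<open>A cycle of length n: a combinatorial map S_n \<rightarrow> \<Gamma>, i.e. a closed walk
w 0, ..., w n = w 0, extended linearly (unit speed) over the edges of S_n.
The circle S_n is parametrised by [0, n).\<close>
definition closed_walk :: "('a \<Rightarrow> 'a \<Rightarrow> bool) \<Rightarrow> nat \<Rightarrow> (nat \<Rightarrow> 'a) \<Rightarrow> bool" where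
  "closed_walk E n w \<longleftrightarrow> is_walk E n w \<and> w n = w 0"

definition cycle_point :: "(nat \<Rightarrow> 'a) \<Rightarrow> real \<Rightarrow> 'a gpoint" where
  "cycle_point w p = (let i = nat \<lfloor>p\<rfloor> in (w i, w (Suc i), p - real i))"

definition antipode :: "nat \<Rightarrow> real \<Rightarrow> real" where
  "antipode n p = (if p + real n / 2 < real n then p + real n / 2 else p + real n / 2 - real n)"

definition almost_isometric_cycle ::
  "('a \<Rightarrow> 'a \<Rightarrow> bool) \<Rightarrow> real \<Rightarrow> nat \<Rightarrow> (nat \<Rightarrow> 'a) \<Rightarrow> bool" where
  "almost_isometric_cycle E K n w \<longleftrightarrow> closed_walk E n w \<and>
     (\<forall>p. 0 \<le> p \<and> p < real n \<longrightarrow>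
        gpdist E (cycle_point w p) (cycle_point w (antipode n p)) \<ge> (1 / K) * (real n / 2))"

definition strongly_shortcut_graph :: "('a \<Rightarrow> 'a \<Rightarrow> bool) \<Rightarrow> bool" where
  "strongly_shortcut_graph E \<longleftrightarrow>
     (\<exists>K>1. \<exists>B::nat. \<forall>n w. almost_isometric_cycle E K n w \<longrightarrow> n \<le> B)"

definition cyc_dist :: "nat \<Rightarrow> nat \<Rightarrow> nat \<Rightarrow> real" where
  "cyc_dist n i j = min \<bar>real i - real j\<bar> (real n - \<bar>real i - real j\<bar>)"

definition approximates_ngons :: "('a \<Rightarrow> 'a \<Rightarrow> bool) \<Rightarrow> bool" where
  "approximates_ngons E \<longleftrightarrow>
     (\<forall>K>1. \<forall>n::nat. \<forall>L::real. \<exists>lam>L. \<exists>f :: nat \<Rightarrow> 'a gpoint.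
        (\<forall>i<n. f i \<in> gpoints E) \<and>
        (\<forall>i<n. \<forall>j<n. (1 / K) * (lam * cyc_dist n i j) \<le> gpdist E (f i) (f j) \<and>
                      gpdist E (f i) (f j) \<le> K * (lam * cyc_dist n i j)))"

end

theory Submission
  imports Defs
begin

text \<open>
If the graph is not strongly shortcut, it contains arbitrarily long cycles that are
1/K-almost isometric with K arbitrarily close to 1. On such a cycle of length N, the graph
distance between two vertices falls short of their distance along the cycle by at most
(1 - 1/K) N/2, so n equally spaced vertices of the cycle form a bilipschitz copy of
(N/n) S_n^0 with constant close to 1.

Conversely, take a (1+d)-bilipschitz copy of \<lambda> S_n^0 with d small and \<lambda>, n d large, and join
the vertices nearest to consecutive points by geodesics. This gives a cycle of length N of about n\<lambda> made of segments
of length about \<lambda>. Antipodal points of this cycle lie on segments whose indices are almost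
antipodal in S_n, so their distance is about N/(2(1+d)^2). Hence these cycles are
(1+8d)-almost isometric and arbitrarily long, and the graph is not strongly shortcut.
\<close>

section \<open>Combinatorial distance\<close>

definition walk_dist :: "('a \<Rightarrow> 'a \<Rightarrow> bool) \<Rightarrow> 'a \<Rightarrow> 'a \<Rightarrow> nat" where
  "walk_dist E u v = (LEAST n. \<exists>w. is_walk E n w \<and> w 0 = u \<and> w n = v)"

lemma gdist_eq_walk_dist: "gdist E u v = real (walk_dist E u v)"
  by (simp add: gdist_def walk_dist_def)

lemma walk_dist_le:
  assumes "is_walk E n w" "w 0 = u" "w n = v"
  shows "walk_dist E u v \<le> n"
  unfolding walk_dist_def by (rule Least_le) (use assms in blast)

lemma shortest_walk_exists:
  assumes "connected_graph E"
  shows "\<exists>w. is_walk E (walk_dist E u v) w \<and> w 0 = u \<and> w (walk_dist E u v) = v"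
proof -
  have "\<exists>n w. is_walk E n w \<and> w 0 = u \<and> w n = v"
    using assms unfolding connected_graph_def by blast
  then show ?thesis unfolding walk_dist_def by (rule LeastI_ex)
qed

lemma is_walk_shift:
  assumes "is_walk E n w" "i \<le> j" "j \<le> n"
  shows "is_walk E (j - i) (\<lambda>t. w (i + t))"
  using assms unfolding is_walk_def by auto

lemma is_walk_reverse:
  assumes "is_graph E" "is_walk E n w"
  shows "is_walk E n (\<lambda>i. w (n - i))"
  unfolding is_walk_def
proof (intro allI impI)
  fix i assume "i < n"
  then have "E (w (n - Suc i)) (w (Suc (n - Suc i)))" and "Suc (n - Suc i) = n - i"
    using assms(2) unfolding is_walk_def by auto
  then show "E (w (n - i)) (w (n - Suc i))"
    using assms(1) unfolding is_graph_def by metis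
qed

lemma is_walk_append:
  assumes "is_walk E m w1" "is_walk E n w2" "w1 m = w2 0"
  shows "is_walk E (m + n) (\<lambda>i. if i \<le> m then w1 i else w2 (i - m))"
  unfolding is_walk_def
proof (intro allI impI)
  fix i assume i: "i < m + n"
  show "E (if i \<le> m then w1 i else w2 (i - m)) (if Suc i \<le> m then w1 (Suc i) else w2 (Suc i - m))"
  proof (cases "i < m")
    case True
    then show ?thesis using assms(1) unfolding is_walk_def by auto
  next
    case False
    then have "E (w2 (i - m)) (w2 (Suc (i - m)))" and "Suc i - m = Suc (i - m)"
      using i assms(2) unfolding is_walk_def by auto
    then show ?thesis using False assms(3) by (cases "i = m") auto
  qed
qed

lemma walk_dist_self [simp]: "walk_dist E u u = 0"
  using walk_dist_le[of E 0 "\<lambda>_. u"] by (simp add: is_walk_def)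

lemma walk_dist_sym:
  assumes "connected_graph E" "is_graph E"
  shows "walk_dist E v u = walk_dist E u v"
proof -
  have "walk_dist E v u \<le> walk_dist E u v" for u v
  proof -
    obtain w where "is_walk E (walk_dist E u v) w" "w 0 = u" "w (walk_dist E u v) = v"
      using shortest_walk_exists[OF assms(1)] by blast
    then show ?thesis
      using walk_dist_le[OF is_walk_reverse[OF assms(2)]] by simp
  qed
  then show ?thesis by (meson antisym)
qed

lemma walk_dist_triangle:
  assumes "connected_graph E"
  shows "walk_dist E u x \<le> walk_dist E u v + walk_dist E v x"
proof -
  obtain w1 where w1: "is_walk E (walk_dist E u v) w1" "w1 0 = u" "w1 (walk_dist E u v) = v"
    using shortest_walk_exists[OF assms] by blast
  obtain w2 where w2: "is_walk E (walk_dist E v x) w2" "w2 0 = v" "w2 (walk_dist E v x) = x"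
    using shortest_walk_exists[OF assms] by blast
  have "is_walk E (walk_dist E u v + walk_dist E v x)
      (\<lambda>i. if i \<le> walk_dist E u v then w1 i else w2 (i - walk_dist E u v))"
    by (rule is_walk_append) (use w1 w2 in auto)
  then show ?thesis by (rule walk_dist_le) (use w1 w2 in auto)
qed

lemma gdist_nonneg: "0 \<le> gdist E u v"
  by (simp add: gdist_eq_walk_dist)

lemma gdist_self [simp]: "gdist E u u = 0"
  by (simp add: gdist_eq_walk_dist)

lemma gdist_sym: "connected_graph E \<Longrightarrow> is_graph E \<Longrightarrow> gdist E v u = gdist E u v"
  by (simp add: gdist_eq_walk_dist walk_dist_sym)

lemma gdist_triangle: "connected_graph E \<Longrightarrow> gdist E u x \<le> gdist E u v + gdist E v x"
  unfolding gdist_eq_walk_dist using walk_dist_triangle[of E u x v] by linarith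

lemma gdist_edge_le_1: "E u v \<Longrightarrow> gdist E u v \<le> 1"
  using walk_dist_le[of E 1 "\<lambda>i. if i = 0 then u else v" u v]
  by (simp add: gdist_eq_walk_dist is_walk_def)

lemma gdist_walk_le:
  assumes "is_walk E n w" "i \<le> j" "j \<le> n"
  shows "gdist E (w i) (w j) \<le> real j - real i"
  using walk_dist_le[OF is_walk_shift[OF assms], of "w i" "w j"] assms(2)
  by (simp add: gdist_eq_walk_dist of_nat_diff)

lemma gdist_walk_le_abs:
  assumes "connected_graph E" "is_graph E" "is_walk E n w" "i \<le> n" "j \<le> n"
  shows "gdist E (w i) (w j) \<le> \<bar>real i - real j\<bar>"
  using gdist_walk_le[OF assms(3), of i j] gdist_walk_le[OF assms(3), of j i]
    gdist_sym[OF assms(1,2), of "w i" "w j"] assms(4,5)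
  by (cases "i \<le> j") auto

lemma walk_concat:
  fixes ll :: "nat \<Rightarrow> nat"
  assumes "\<And>i. i < n \<Longrightarrow> \<exists>W. is_walk E (ll i) W \<and> W 0 = V i \<and> W (ll i) = V (Suc i)"
  shows "\<exists>w. is_walk E (\<Sum>i<n. ll i) w \<and> w 0 = V 0 \<and> w (\<Sum>i<n. ll i) = V n \<and>
    (\<forall>i<n. \<forall>t\<le>ll i. gdist E (V i) (w ((\<Sum>m<i. ll m) + t)) \<le> t)"
  using assms
proof (induction n)
  case 0
  show ?case by (intro exI[of _ "\<lambda>_. V 0"]) (simp add: is_walk_def)
next
  case (Suc n)
  let ?P = "\<lambda>i. \<Sum>m<i. ll m"
  obtain w where w: "is_walk E (?P n) w" "w 0 = V 0" "w (?P n) = V n"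
    and near: "\<forall>i<n. \<forall>t\<le>ll i. gdist E (V i) (w (?P i + t)) \<le> t"
    using Suc by auto
  obtain W where W: "is_walk E (ll n) W" "W 0 = V n" "W (ll n) = V (Suc n)"
    using Suc.prems by blast
  define w' where "w' k = (if k \<le> ?P n then w k else W (k - ?P n))" for k
  have "is_walk E (?P n + ll n) w'"
    unfolding w'_def by (rule is_walk_append[OF w(1) W(1)]) (simp add: w(3) W(2))
  moreover have "w' 0 = V 0" "w' (?P n + ll n) = V (Suc n)"
    using w(2,3) W by (auto simp: w'_def)
  moreover have "gdist E (V i) (w' (?P i + t)) \<le> t" if "i < Suc n" "t \<le> ll i" for i t
  proof (cases "i < n")
    case True
    have "?P (Suc i) \<le> ?P n" using True by (intro sum_mono2) auto
    then show ?thesis using near True that(2) by (simp add: w'_def)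
  next
    case False
    then have "i = n" using that(1) by simp
    then have "w' (?P i + t) = W t" using w(3) W(2) by (cases t) (simp_all add: w'_def)
    then show ?thesis
      using gdist_walk_le[OF W(1), of 0 t] that(2) W(2) \<open>i = n\<close> by simp
  qed
  ultimately show ?case by (intro exI[of _ w']) simp
qed

section \<open>The geometric realisation\<close>

lemma vertex_in_gpoints [simp]: "(a, a, 0) \<in> gpoints E"
  unfolding gpoints_def by auto

lemma Min_insert4: "Min {a, b, c, d::real} = min a (min b (min c d))"
  by (simp add: min.assoc)

lemma gpdist_vertices: "gpdist E (a, a, 0) (b, b, 0) = gdist E a b"
  unfolding gpdist_def Let_def Min_insert4 prod.case using gdist_nonneg[of E] by auto

lemma gpdist_edge_point_vertex_le:
  "gpdist E (u, v, s) (a, a, 0) \<le> s + gdist E u a"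
  "gpdist E (u, v, s) (a, a, 0) \<le> (1 - s) + gdist E v a"
  "gpdist E (a, a, 0) (u, v, s) \<le> gdist E a u + s"
  "gpdist E (a, a, 0) (u, v, s) \<le> gdist E a v + (1 - s)"
  unfolding gpdist_def Let_def Min_insert4 prod.case by auto

lemma gpdist_triangle:
  assumes C: "connected_graph E" and G: "is_graph E"
    and "x \<in> gpoints E" "y \<in> gpoints E" "z \<in> gpoints E"
  shows "gpdist E x z \<le> gpdist E x y + gpdist E y z"
proof -
  obtain u v s u' v' t u'' v'' r where xyz: "x = (u, v, s)" "y = (u', v', t)" "z = (u'', v'', r)"
    by (cases x, cases y, cases z) auto
  have x: "0 \<le> s" "s \<le> 1" "u = v \<Longrightarrow> s = 0"
   and y: "0 \<le> t" "t \<le> 1" "u' = v' \<Longrightarrow> t = 0"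
   and z: "0 \<le> r" "r \<le> 1" "u'' = v'' \<Longrightarrow> r = 0"
    using assms(3-5) G unfolding xyz gpoints_def is_graph_def by auto
  have "gdist E u' v' \<le> 1" "gdist E v' u' \<le> 1"
    using assms(4) G gdist_edge_le_1[of E u' v'] gdist_edge_le_1[of E v' u']
    unfolding xyz gpoints_def is_graph_def by auto
  moreover note T = gdist_triangle[OF C]
  \<comment> \<open>each route from x to z through y runs along y's edge or through one of its endpoints\<close>
  ultimately show ?thesis
    unfolding xyz gpdist_def Let_def Min_insert4 prod.case
    using T[of u u'' u'] T[of u u'' v'] T[of u v'' u'] T[of u v'' v']
      T[of v u'' u'] T[of v u'' v'] T[of v v'' u'] T[of v v'' v']
      T[of u' u'' v'] T[of u' v'' v'] T[of v' u'' u'] T[of v' v'' u']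
      x y z gdist_nonneg[of E]
    by (smt (verit))
qed

lemma gdist_base_vertices_approx:
  assumes C: "connected_graph E" and G: "is_graph E" and "x \<in> gpoints E" "y \<in> gpoints E"
  shows "\<bar>gdist E (fst x) (fst y) - gpdist E x y\<bar> \<le> 2"
proof -
  have near: "gpdist E z (fst z, fst z, 0) \<le> 1 \<and> gpdist E (fst z, fst z, 0) z \<le> 1"
    if "z \<in> gpoints E" for z
  proof -
    obtain u v s where z: "z = (u, v, s)" by (cases z) auto
    then have "s \<le> 1" using that unfolding gpoints_def by auto
    then show ?thesis
      using gpdist_edge_point_vertex_le(1)[of E u v s u]
        gpdist_edge_point_vertex_le(3)[of E u u v s]
      unfolding z by simp
  qed
  define a b where "a = (fst x, fst x, 0::real)" and "b = (fst y, fst y, 0::real)"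
  have ab: "a \<in> gpoints E" "b \<in> gpoints E" by (simp_all add: a_def b_def)
  note T = gpdist_triangle[OF C G]
  show ?thesis
    using T[OF assms(3) ab(1) assms(4)] T[OF ab(1) ab(2) assms(4)]
      T[OF ab(1) assms(3) ab(2)] T[OF assms(3,4) ab(2)]
      near[OF assms(3)] near[OF assms(4)] gpdist_vertices[of E "fst x" "fst y"]
    unfolding a_def b_def by linarith
qed

section \<open>Cycles and antipodes\<close>

definition circle_dist :: "real \<Rightarrow> real \<Rightarrow> real \<Rightarrow> real" where
  "circle_dist N x y = min \<bar>x - y\<bar> (N - \<bar>x - y\<bar>)"

lemma cyc_dist_eq_circle_dist: "cyc_dist n i j = circle_dist (real n) (real i) (real j)"
  by (simp add: cyc_dist_def circle_dist_def)

lemma circle_dist_lipschitz: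
  "\<bar>circle_dist N a b - circle_dist N x y\<bar> \<le> \<bar>(a - b) - (x - y)\<bar>"
  unfolding circle_dist_def by (smt (verit))

lemma circle_dist_scale:
  assumes "0 \<le> c"
  shows "circle_dist (c * N) (c * x) (c * y) = c * circle_dist N x y"
proof -
  have "\<bar>c * x - c * y\<bar> = c * \<bar>x - y\<bar>"
    using assms by (simp add: abs_mult flip: right_diff_distrib)
  then show ?thesis
    using assms by (simp add: circle_dist_def min_mult_distrib_left right_diff_distrib)
qed

lemma closed_walk_gdist_le:
  assumes C: "connected_graph E" and G: "is_graph E" and w: "closed_walk E N w"
    and "k \<le> N" "m \<le> N"
  shows "gdist E (w k) (w m) \<le> circle_dist N k m"
proof -
  have W: "is_walk E N w" "w N = w 0" using w unfolding closed_walk_def by auto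
  note walk_le = gdist_walk_le_abs[OF C G W(1)]
  have "gdist E (w k) (w m) \<le> gdist E (w k) (w 0) + gdist E (w 0) (w m)"
    by (rule gdist_triangle[OF C])
  moreover have "gdist E (w k) (w 0) \<le> min k (N - k)" "gdist E (w 0) (w m) \<le> min m (N - m)"
    using walk_le[of k 0] walk_le[of k N] walk_le[of 0 m] walk_le[of N m] W(2) assms(4,5)
    by (simp_all add: of_nat_diff)
  ultimately show ?thesis
    using walk_le[of k m] assms(4,5) unfolding circle_dist_def by (auto simp: abs_if)
qed

lemma cycle_point_in_gpoints:
  assumes w: "closed_walk E N w" and p: "0 \<le> p" "p < real N"
  shows "cycle_point w p \<in> gpoints E"
proof -
  let ?k = "nat \<lfloor>p\<rfloor>"
  have "?k < N" using p by linarith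
  then have "E (w ?k) (w (Suc ?k))" using w unfolding closed_walk_def is_walk_def by auto
  moreover have "0 \<le> p - real ?k" "p - real ?k \<le> 1" using p by linarith+
  ultimately show ?thesis unfolding cycle_point_def Let_def gpoints_def by auto
qed

lemma cycle_point_vertex_dist_le:
  assumes C: "connected_graph E" and G: "is_graph E" and w: "closed_walk E N w"
    and p: "0 \<le> p" "p < real N" and m: "m \<le> N"
  shows "gpdist E (cycle_point w p) (w m, w m, 0) \<le> circle_dist N p m"
    and "gpdist E (w m, w m, 0) (cycle_point w p) \<le> circle_dist N p m"
proof -
  define k where "k = nat \<lfloor>p\<rfloor>"
  have k: "k < N" "real k \<le> p" "p < real k + 1" "m \<le> k \<or> Suc k \<le> m"
    unfolding k_def using p by linarith+
  have cp: "cycle_point w p = (w k, w (Suc k), p - real k)"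
    unfolding cycle_point_def k_def Let_def ..
  have d1: "gdist E (w k) (w m) \<le> circle_dist N k m"
    and d2: "gdist E (w (Suc k)) (w m) \<le> circle_dist N (Suc k) m"
    by (rule closed_walk_gdist_le[OF C G w]; use k m in simp)+
  have "min ((p - k) + circle_dist N k m) ((1 - (p - k)) + circle_dist N (Suc k) m)
      \<le> circle_dist N p m"
    using k m unfolding circle_dist_def by (smt (verit) of_nat_Suc of_nat_le_iff)
  then show "gpdist E (cycle_point w p) (w m, w m, 0) \<le> circle_dist N p m"
    and "gpdist E (w m, w m, 0) (cycle_point w p) \<le> circle_dist N p m"
    using gpdist_edge_point_vertex_le(1,2)[of E "w k" "w (Suc k)" "p - k" "w m"]
      gpdist_edge_point_vertex_le(3,4)[of E "w m" "w k" "w (Suc k)" "p - k"] d1 d2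
      gdist_sym[OF C G, of "w k" "w m"] gdist_sym[OF C G, of "w (Suc k)" "w m"]
    unfolding cp by linarith+
qed

lemma gdist_floor_vertices_le_gpdist:
  assumes C: "connected_graph E" and G: "is_graph E" and w: "closed_walk E N w"
    and p: "0 \<le> p" "p < N" and q: "0 \<le> q" "q < N"
  shows "gdist E (w (nat \<lfloor>p\<rfloor>)) (w (nat \<lfloor>q\<rfloor>)) \<le> gpdist E (cycle_point w p) (cycle_point w q) + 2"
proof -
  define k k' where "k = nat \<lfloor>p\<rfloor>" and "k' = nat \<lfloor>q\<rfloor>"
  have k: "real k \<le> p" "p < real k + 1" "k < N" and k': "real k' \<le> q" "q < real k' + 1" "k' < N"
    unfolding k_def k'_def using p q by linarith+
  have cp: "cycle_point w p \<in> gpoints E" "cycle_point w q \<in> gpoints E"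
    using cycle_point_in_gpoints[OF w] p q by auto
  have "circle_dist N p k \<le> 1" "circle_dist N q k' \<le> 1"
    using k k' unfolding circle_dist_def by auto
  then have "gpdist E (w k, w k, 0) (cycle_point w p) \<le> 1"
    "gpdist E (cycle_point w q) (w k', w k', 0) \<le> 1"
    using cycle_point_vertex_dist_le[OF C G w] p q k(3) k'(3) by (meson less_imp_le order_trans)+
  then show ?thesis
    using gpdist_triangle[OF C G vertex_in_gpoints[of "w k"] cp(1) vertex_in_gpoints[of "w k'"]]
      gpdist_triangle[OF C G cp vertex_in_gpoints[of "w k'"]]
      gpdist_vertices[of E "w k" "w k'"]
    unfolding k_def k'_def by linarith
qed

lemma antipode_bounds:
  fixes N :: nat and p :: real
  assumes "0 \<le> p" "p < N"
  shows "0 \<le> antipode N p" "antipode N p < N"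
  using assms unfolding antipode_def by auto

lemma circle_dist_antipode_self:
  fixes N :: nat and p :: real
  assumes "0 \<le> p" "p < N"
  shows "circle_dist N p (antipode N p) = N / 2"
  using assms unfolding circle_dist_def antipode_def by auto

lemma circle_dist_antipode_le:
  fixes N :: nat and p b :: real
  assumes "0 \<le> p" "p < N" "0 \<le> b" "b < N"
  shows "circle_dist N (antipode N p) b \<le> N / 2 - circle_dist N p b"
  using assms unfolding circle_dist_def antipode_def by (auto simp: abs_if min_def)

lemma almost_isometric_cycle_mono:
  assumes "almost_isometric_cycle E r N w" "0 < r" "r \<le> K"
  shows "almost_isometric_cycle E K N w"
proof -
  have "(1 / K) * (real N / 2) \<le> (1 / r) * (real N / 2)"
    using assms(2,3) by (intro mult_right_mono divide_left_mono) auto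
  then show ?thesis using assms(1) unfolding almost_isometric_cycle_def by force
qed

text \<open>The antipode of a lies within circle distance N/2 - circle_dist N a b of b, so the
lower bound for the antipodal pair passes to the pair (a, b) by the triangle inequality.\<close>
lemma almost_isometric_cycle_gdist_ge:
  assumes C: "connected_graph E" and G: "is_graph E"
    and aic: "almost_isometric_cycle E K N w" and ab: "a < N" "b < N"
  shows "circle_dist N a b - (1 - 1 / K) * (real N / 2) \<le> gdist E (w a) (w b)"
proof -
  have w: "closed_walk E N w" using aic unfolding almost_isometric_cycle_def by auto
  let ?a = "(w a, w a, 0::real)" and ?b = "(w b, w b, 0::real)" and ?q = "antipode N (real a)"
  have q: "0 \<le> ?q" "?q < real N" using antipode_bounds[where p = "real a"] ab by auto
  have pa: "cycle_point w a \<in> gpoints E" and pq: "cycle_point w ?q \<in> gpoints E"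
    using cycle_point_in_gpoints[OF w] q ab by auto
  have "(1 / K) * (real N / 2) \<le> gpdist E (cycle_point w a) (cycle_point w ?q)"
    using aic ab unfolding almost_isometric_cycle_def by auto
  also have "\<dots> \<le> gpdist E (cycle_point w a) ?a + gpdist E ?a ?b + gpdist E ?b (cycle_point w ?q)"
    using gpdist_triangle[OF C G pa vertex_in_gpoints[of "w a"] pq]
      gpdist_triangle[OF C G vertex_in_gpoints[of "w a"] vertex_in_gpoints[of "w b"] pq]
    by linarith
  also have "\<dots> \<le> circle_dist N a a + gdist E (w a) (w b) + circle_dist N ?q b"
    using cycle_point_vertex_dist_le[OF C G w] q ab gpdist_vertices[of E "w a" "w b"]
    by (smt (verit) less_imp_le of_nat_0_le_iff of_nat_less_iff)
  also have "\<dots> \<le> gdist E (w a) (w b) + (real N / 2 - circle_dist N a b)"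
    using circle_dist_antipode_le[where p = "real a" and b = "real b"] ab
    by (simp add: circle_dist_def)
  finally show ?thesis by (simp add: field_simps)
qed

section \<open>Sampling an almost isometric cycle\<close>

lemma of_nat_div_bounds:
  "real m / real n - 1 < real (m div n)" "real (m div n) \<le> real m / real n"
proof -
  have "real (m div n) = of_int \<lfloor>real m / real n\<rfloor>"
    by (simp add: floor_divide_of_nat_eq)
  then show "real m / real n - 1 < real (m div n)" "real (m div n) \<le> real m / real n"
    by linarith+
qed

lemma circle_dist_samples_approx:
  fixes N n i j :: nat
  assumes "0 < n"
  shows "\<bar>circle_dist N (i * N div n) (j * N div n) - real N / real n * cyc_dist n i j\<bar> \<le> 1"
proof -
  define lam where "lam = real N / real n"
  have "lam * cyc_dist n i j = circle_dist N (lam * i) (lam * j)"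
    using circle_dist_scale[of lam n i j] assms unfolding cyc_dist_eq_circle_dist lam_def by simp
  moreover have "lam * i - 1 < i * N div n" "i * N div n \<le> lam * i"
    "lam * j - 1 < j * N div n" "j * N div n \<le> lam * j"
    using of_nat_div_bounds[of "i * N" n] of_nat_div_bounds[of "j * N" n]
    unfolding lam_def by (simp_all add: field_simps)
  ultimately show ?thesis
    using circle_dist_lipschitz[of N "i * N div n" "j * N div n" "lam * i" "lam * j"]
    unfolding lam_def by linarith
qed

lemma additive_error_le_multiplicative:
  fixes K lam c g A :: real
  assumes K: "1 < K" and lamK: "2 * K \<le> (K - 1) * lam" and c: "1 \<le> c"
    and approx: "\<bar>A - lam * c\<bar> \<le> 1" and up: "g \<le> A" and lo: "A - (1 - 1 / K) * lam / 2 \<le> g"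
  shows "1 / K * (lam * c) \<le> g \<and> g \<le> K * (lam * c)"
proof
  define t where "t = (1 - 1 / K) * lam"
  have "t = (K - 1) * lam / K" using K unfolding t_def by (simp add: field_simps)
  then have t: "2 \<le> t" using lamK pos_le_divide_eq[of K 2] K by simp
  have "1 / K * (lam * c) = lam * c - t * c" unfolding t_def by (simp add: algebra_simps)
  also have "\<dots> \<le> lam * c - t" using c t by (simp add: mult_le_cancel_left1)
  also have "\<dots> \<le> g"
  proof -
    have "A - t / 2 \<le> g" using lo unfolding t_def .
    then show ?thesis using approx t by linarith
  qed
  finally show "1 / K * (lam * c) \<le> g" .
  have "g \<le> lam * c + 1" using up approx by linarith
  also have "\<dots> \<le> lam * c + (K - 1) * lam * c"
    using c lamK K by (smt (verit) mult_le_cancel_left1)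
  also have "\<dots> = K * (lam * c)" by (simp add: algebra_simps)
  finally show "g \<le> K * (lam * c)" .
qed

lemma almost_isometric_cycle_samples_bilipschitz:
  assumes C: "connected_graph E" and G: "is_graph E"
    and aic: "almost_isometric_cycle E K0 N w" and n: "0 < n" and K: "1 < K"
    and K0: "real n * (1 - 1 / K0) \<le> 1 - 1 / K"
    and long: "2 * K / (K - 1) \<le> real N / real n"
    and ij: "i < n" "j < n"
  defines "lam \<equiv> real N / real n"
  shows "1 / K * (lam * cyc_dist n i j) \<le> gdist E (w (i * N div n)) (w (j * N div n))"
    and "gdist E (w (i * N div n)) (w (j * N div n)) \<le> K * (lam * cyc_dist n i j)"
proof -
  let ?a = "i * N div n" and ?b = "j * N div n" and ?c = "cyc_dist n i j"
  let ?g = "gdist E (w ?a) (w ?b)"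
  have lamK: "2 * K \<le> (K - 1) * lam"
    using pos_divide_le_eq[of "K - 1" "2 * K" lam] long K by (simp add: lam_def mult.commute)
  then have lam: "0 < lam" using K by (smt (verit) mult_nonneg_nonpos)
  then have "0 < N" unfolding lam_def by (cases N) auto
  then have ab: "?a < N" "?b < N"
    using ij by (simp_all add: less_mult_imp_div_less mult.commute)
  have up: "?g \<le> circle_dist N ?a ?b"
    using closed_walk_gdist_le[OF C G _ less_imp_le less_imp_le] aic ab
    unfolding almost_isometric_cycle_def by blast
  have "(1 - 1 / K0) * (real N / 2) = lam / 2 * (real n * (1 - 1 / K0))"
    using n unfolding lam_def by simp
  also have "\<dots> \<le> lam / 2 * (1 - 1 / K)" using K0 lam by (intro mult_left_mono) auto
  also have "\<dots> = (1 - 1 / K) * lam / 2" by simp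
  finally have lo: "circle_dist N ?a ?b - (1 - 1 / K) * lam / 2 \<le> ?g"
    using almost_isometric_cycle_gdist_ge[OF C G aic ab] by linarith
  have approx: "\<bar>circle_dist N ?a ?b - lam * ?c\<bar> \<le> 1"
    using circle_dist_samples_approx[OF n] unfolding lam_def .
  have "1 / K * (lam * ?c) \<le> ?g \<and> ?g \<le> K * (lam * ?c)"
  proof (cases "i = j")
    case True
    then show ?thesis by (simp add: cyc_dist_def)
  next
    case False
    then have "1 \<le> ?c" using ij unfolding cyc_dist_def by auto
    then show ?thesis using additive_error_le_multiplicative[OF K lamK _ approx up lo] by simp
  qed
  then show "1 / K * (lam * ?c) \<le> ?g" "?g \<le> K * (lam * ?c)" by auto
qed

lemma approximates_ngons_if_not_strongly_shortcut:
  assumes C: "connected_graph E" and G: "is_graph E" and not_ss: "\<not> strongly_shortcut_graph E"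
  shows "approximates_ngons E"
  unfolding approximates_ngons_def
proof (intro allI impI)
  fix K :: real and n :: nat and L :: real
  assume K: "1 < K"
  show "\<exists>lam>L. \<exists>f. (\<forall>i<n. f i \<in> gpoints E) \<and>
      (\<forall>i<n. \<forall>j<n. 1 / K * (lam * cyc_dist n i j) \<le> gpdist E (f i) (f j) \<and>
                   gpdist E (f i) (f j) \<le> K * (lam * cyc_dist n i j))"
  proof (cases "n = 0")
    case True
    then show ?thesis by (intro exI[of _ "L + 1"]) auto
  next
    case False
    \<comment> \<open>the cycle constant 1/(1 - \<epsilon>) makes its additive error (1 - 1/K) (N/n)/2\<close>
    define \<epsilon> where "\<epsilon> = (1 - 1 / K) / real n"
    have "0 < 1 / K" "1 / K < 1" "1 \<le> real n" using K False by simp_all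
    then have "0 < 1 - 1 / K" "1 - 1 / K < real n" by linarith+
    then have "0 < \<epsilon>" "\<epsilon> < 1" unfolding \<epsilon>_def using False by simp_all
    then have K0: "1 < 1 / (1 - \<epsilon>)" "real n * (1 - 1 / (1 / (1 - \<epsilon>))) = 1 - 1 / K"
      using False by (simp_all add: \<epsilon>_def)
    define M where "M = max L (2 * K / (K - 1))"
    obtain N w where aic: "almost_isometric_cycle E (1 / (1 - \<epsilon>)) N w"
      and long: "\<not> N \<le> nat \<lceil>real n * M\<rceil>"
      using not_ss K0(1) unfolding strongly_shortcut_graph_def by blast
    define lam where "lam = real N / real n"
    have "M < lam" using long False unfolding lam_def by (simp add: field_simps) linarith
    then have lam: "L < lam" "2 * K / (K - 1) \<le> lam" unfolding M_def by auto
    let ?f = "\<lambda>i. (w (i * N div n), w (i * N div n), 0::real)"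
    show ?thesis
    proof (intro exI conjI allI impI)
      show "L < lam" by (fact lam(1))
      fix i j assume "i < n" "j < n"
      then show "1 / K * (lam * cyc_dist n i j) \<le> gpdist E (?f i) (?f j)"
        and "gpdist E (?f i) (?f j) \<le> K * (lam * cyc_dist n i j)"
        using almost_isometric_cycle_samples_bilipschitz[OF C G aic _ K] K0(2) lam(2) False
        unfolding gpdist_vertices lam_def by auto
    qed simp
  qed
qed

section \<open>Closing up an approximate n-gon\<close>

lemma less_sum_lessThan_decompose:
  fixes ll :: "nat \<Rightarrow> nat"
  assumes "k < (\<Sum>i<n. ll i)"
  shows "\<exists>i<n. \<exists>t<ll i. k = (\<Sum>m<i. ll m) + t"
  using assms
proof (induction n)
  case (Suc n)
  show ?case
  proof (cases "k < (\<Sum>i<n. ll i)")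
    case True
    then show ?thesis using Suc.IH less_Suc_eq by blast
  next
    case False
    then have "k = (\<Sum>i<n. ll i) + (k - (\<Sum>i<n. ll i))" "k - (\<Sum>i<n. ll i) < ll n"
      using Suc.prems by auto
    then show ?thesis by blast
  qed
qed simp

lemma sum_lessThan_le_add:
  fixes ll :: "nat \<Rightarrow> nat"
  assumes "i \<le> j" "\<And>m. i \<le> m \<Longrightarrow> m < j \<Longrightarrow> ll m \<le> b"
  shows "(\<Sum>m<j. ll m) \<le> (\<Sum>m<i. ll m) + (j - i) * b"
  using assms
proof (induction j rule: dec_induct)
  case (step j)
  then have "(\<Sum>m<j. ll m) + ll j \<le> (\<Sum>m<i. ll m) + (j - i) * b + b" by (intro add_mono) auto
  then show ?case using step.hyps by (simp add: Suc_diff_le)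
qed simp

lemma cyc_dist_segments_ge:
  fixes ll :: "nat \<Rightarrow> nat" and b :: nat
  assumes bnd: "\<And>m. m < n \<Longrightarrow> ll m \<le> b" and b: "0 < b"
    and ij: "i < n" "j < n" and t: "t < ll i" "t' < ll j"
  shows "circle_dist (\<Sum>m<n. ll m) ((\<Sum>m<i. ll m) + t) ((\<Sum>m<j. ll m) + t') / b - 1
    \<le> cyc_dist n i j"
proof -
  let ?P = "\<lambda>i. real (\<Sum>m<i. ll m)" and ?N = "real (\<Sum>m<n. ll m)"
  have ordered: "circle_dist ?N (?P i + t) (?P j + t') < b * (cyc_dist n i j + 1)"
    if ij: "i \<le> j" "j < n" and t: "t < ll i" "t' < ll j" for i j t t'
  proof -
    have "(\<Sum>m<j. ll m) \<le> (\<Sum>m<i. ll m) + (j - i) * b"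
      "(\<Sum>m<n. ll m) \<le> (\<Sum>m<j. ll m) + (n - j) * b" "(\<Sum>m<i. ll m) \<le> i * b"
      using sum_lessThan_le_add[of i j ll b] sum_lessThan_le_add[of j n ll b]
        sum_lessThan_le_add[of 0 i ll b] ij bnd by auto
    then have "?P j \<le> ?P i + real (j - i) * b" "?N \<le> ?P j + real (n - j) * b" "?P i \<le> real i * b"
      by (simp_all only: of_nat_mono flip: of_nat_add of_nat_mult)
    moreover have "?P i \<le> ?P j" by (simp add: ij(1) sum_mono2)
    moreover have "t < b" "t' < b" using t bnd ij by (simp_all add: less_le_trans)
    ultimately have "\<bar>?P i + t - (?P j + t')\<bar> < b * (real (j - i) + 1)"
      "?N - \<bar>?P i + t - (?P j + t')\<bar> < b * (real n - real (j - i) + 1)"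
      using ij by (simp_all add: of_nat_diff algebra_simps abs_if)
    then show ?thesis
      using ij unfolding circle_dist_def cyc_dist_def by (simp add: of_nat_diff min_def)
  qed
  have "circle_dist ?N (?P i + t) (?P j + t') < b * (cyc_dist n i j + 1)"
  proof (cases "i \<le> j")
    case True
    then show ?thesis using ordered ij t by simp
  next
    case False
    then show ?thesis
      using ordered[of j i t' t] ij t
      unfolding circle_dist_def cyc_dist_def by (simp add: abs_minus_commute)
  qed
  then show ?thesis using b by (simp add: divide_le_eq algebra_simps)
qed

lemma concatenated_cycle_antipodal_gpdist_ge:
  fixes ll :: "nat \<Rightarrow> nat" and b N :: nat and p :: real
  assumes C: "connected_graph E" and G: "is_graph E"
    and N: "N = (\<Sum>i<n. ll i)" and w: "closed_walk E N w"
    and near: "\<And>i t. i < n \<Longrightarrow> t \<le> ll i \<Longrightarrow> gdist E (V i) (w ((\<Sum>m<i. ll m) + t)) \<le> t"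
    and bnd: "\<And>i. i < n \<Longrightarrow> ll i \<le> b" and b: "0 < b"
    and V: "\<And>i j. i < n \<Longrightarrow> j < n \<Longrightarrow> \<mu> * cyc_dist n i j - 2 \<le> gdist E (V i) (V j)"
    and \<mu>: "0 \<le> \<mu>"
    and p: "0 \<le> p" "p < N"
  shows "\<mu> * ((real N / 2 - 1) / b - 1) - 4 - 2 * real b
    \<le> gpdist E (cycle_point w p) (cycle_point w (antipode N p))"
proof -
  let ?q = "antipode N p"
  have q: "0 \<le> ?q" "?q < N" using antipode_bounds[OF p] by auto
  define k k' where "k = nat \<lfloor>p\<rfloor>" and "k' = nat \<lfloor>?q\<rfloor>"
  have k: "real k \<le> p" "p < real k + 1" "k < N" and k': "real k' \<le> ?q" "?q < real k' + 1" "k' < N"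
    unfolding k_def k'_def using p q by linarith+
  obtain i t where i: "i < n" "t < ll i" "k = (\<Sum>m<i. ll m) + t"
    using less_sum_lessThan_decompose[of k ll n] k(3) N by auto
  obtain j t' where j: "j < n" "t' < ll j" "k' = (\<Sum>m<j. ll m) + t'"
    using less_sum_lessThan_decompose[of k' ll n] k'(3) N by auto
  have "circle_dist N k k' > real N / 2 - 1"
    using circle_dist_lipschitz[of N k k' p ?q] circle_dist_antipode_self[OF p] k k' by linarith
  then have "(real N / 2 - 1) / b - 1 \<le> cyc_dist n i j"
    using cyc_dist_segments_ge[OF bnd b i(1) j(1) i(2) j(2)] b N i(3) j(3)
    by (smt (verit) divide_right_mono of_nat_0_le_iff)
  then have "\<mu> * ((real N / 2 - 1) / b - 1) - 2 \<le> gdist E (V i) (V j)"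
    using V[OF i(1) j(1)] \<mu> by (smt (verit) mult_left_mono)
  also have "\<dots> \<le> gdist E (V i) (w k) + gdist E (w k) (w k') + gdist E (w k') (V j)"
    using gdist_triangle[OF C, of "V i" "V j" "w k"] gdist_triangle[OF C, of "w k" "V j" "w k'"]
    by linarith
  also have "\<dots> \<le> gdist E (w k) (w k') + 2 * real b"
    using near[OF i(1), of t] near[OF j(1), of t'] gdist_sym[OF C G, of "V j" "w k'"]
      bnd[OF i(1)] bnd[OF j(1)] i j by simp
  also have "gdist E (w k) (w k') \<le> gpdist E (cycle_point w p) (cycle_point w ?q) + 2"
    unfolding k_def k'_def by (rule gdist_floor_vertices_le_gpdist[OF C G w p q])
  finally show ?thesis by linarith
qed

lemma segment_ratio_ge:
  fixes d lam b :: real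
  assumes d: "0 < d" "d \<le> 1 / 8" and lam: "0 < lam" "2 \<le> d * lam"
    and b: "1 \<le> b" "b \<le> (1 + d) * lam + 2"
  shows "1 / (1 + 4 * d) \<le> lam / (1 + d) / b"
proof -
  have "b \<le> (1 + 2 * d) * lam" using b lam by (simp add: algebra_simps)
  then have "(1 + d) * b \<le> (1 + d) * ((1 + 2 * d) * lam)" using d by simp
  also have "\<dots> = ((1 + d) * (1 + 2 * d)) * lam" by simp
  also have "\<dots> \<le> (1 + 4 * d) * lam"
  proof (rule mult_right_mono)
    have "d * (2 * d) \<le> d * 1" using d by (intro mult_left_mono) auto
    then show "(1 + d) * (1 + 2 * d) \<le> 1 + 4 * d" by (simp add: algebra_simps)
  qed (use lam in simp)
  finally have "lam / ((1 + 4 * d) * lam) \<le> lam / ((1 + d) * b)"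
    using d b lam by (intro divide_left_mono) auto
  then show ?thesis using lam by simp
qed

lemma inverse_halves_gap_ge:
  fixes d N :: real
  assumes d: "0 < d" "d \<le> 1 / 8" and N: "0 \<le> N"
  shows "2 * d * N / 3 \<le> N / (2 * (1 + 4 * d)) - N / (2 * (1 + 8 * d))"
proof -
  define a c where "a = 1 + 4 * d" and "c = 1 + 8 * d"
  have ac: "0 < a" "0 < c" "c - a = 4 * d" using d unfolding a_def c_def by auto
  have "a * c \<le> 3 / 2 * 2" unfolding a_def c_def using d by (intro mult_mono) auto
  then have "2 * d * N / 3 \<le> 2 * d * N / (a * c)"
    using d N ac by (intro divide_left_mono) auto
  also have "\<dots> = N * (c - a) / (2 * a * c)" using ac(3) by simp
  also have "\<dots> = N / (2 * a) - N / (2 * c)" using ac(1,2) by (simp add: field_simps)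
  finally show ?thesis unfolding a_def c_def .
qed

lemma antipodal_margin:
  fixes d lam b N n :: real
  assumes d: "0 < d" "d \<le> 1 / 8" and lam: "8 \<le> lam" "2 \<le> d * lam"
    and b: "1 \<le> b" "b \<le> (1 + d) * lam + 2"
    and N: "n * (lam / (1 + d) - 2) \<le> N" and n: "48 \<le> n * d"
  shows "N / (2 * (1 + 8 * d)) \<le> lam / (1 + d) * ((N / 2 - 1) / b - 1) - 4 - 2 * b"
proof -
  define \<mu> where "\<mu> = lam / (1 + d)"
  have \<mu>: "0 < \<mu>" "\<mu> \<le> lam" using d lam by (auto simp: \<mu>_def divide_le_eq)
  have "0 \<le> n" using n d by (smt (verit) mult_nonpos_nonneg)
  have "lam = (1 + d) * \<mu>" unfolding \<mu>_def using d by simp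
  also have "\<dots> \<le> 9 / 8 * \<mu>" using d \<mu> by (intro mult_right_mono) auto
  finally have "lam / 4 \<le> \<mu> - 2" using lam by linarith
  then have "n * (lam / 4) \<le> n * (\<mu> - 2)" using \<open>0 \<le> n\<close> by (rule mult_left_mono)
  then have N4: "n * lam / 4 \<le> N" using N unfolding \<mu>_def by linarith
  have "0 \<le> n * lam / 4" using \<open>0 \<le> n\<close> lam by simp
  with N4 have N0: "0 \<le> N" by linarith
  have "\<mu> * ((N / 2 - 1) / b - 1) = \<mu> / b * (N / 2) - \<mu> / b - \<mu>"
    using b by (simp add: field_simps)
  moreover have "1 / (1 + 4 * d) * (N / 2) \<le> \<mu> / b * (N / 2)"
    using segment_ratio_ge[OF d _ lam(2) b] lam N0 unfolding \<mu>_def by (intro mult_right_mono) auto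
  moreover have "1 / (1 + 4 * d) * (N / 2) = N / (2 * (1 + 4 * d))" by simp
  moreover have "\<mu> / b \<le> \<mu>" using \<mu> b by (simp add: divide_le_eq mult_le_cancel_left1)
  ultimately have lower: "N / (2 * (1 + 4 * d)) - 2 * lam \<le> \<mu> * ((N / 2 - 1) / b - 1)"
    using \<mu> by linarith
  have "d * (n * lam / 4) \<le> d * N" using N4 d by (intro mult_left_mono) auto
  moreover have "d * (n * lam / 4) = (n * d) * lam / 4" by simp
  moreover have "48 * lam \<le> (n * d) * lam" using n lam by (intro mult_right_mono) auto
  ultimately have "12 * lam \<le> d * N" by linarith
  moreover have "b \<le> 5 / 4 * lam"
  proof -
    have "d * lam \<le> 1 / 8 * lam" using d lam by (intro mult_right_mono) auto
    moreover have "(1 + d) * lam = lam + d * lam" by (simp add: algebra_simps)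
    ultimately show ?thesis using b lam by linarith
  qed
  ultimately show ?thesis
    using lower inverse_halves_gap_ge[OF d N0] lam unfolding \<mu>_def by linarith
qed

lemma bilipschitz_points_base_vertices:
  assumes C: "connected_graph E" and G: "is_graph E" and "x \<in> gpoints E" "y \<in> gpoints E"
    and lo: "1 / K * D \<le> gpdist E x y" and up: "gpdist E x y \<le> K * D"
  shows "D / K - 2 \<le> gdist E (fst x) (fst y)" "gdist E (fst x) (fst y) \<le> K * D + 2"
  using gdist_base_vertices_approx[OF assms(1-4)] lo up unfolding abs_le_iff by simp_all

lemma almost_isometric_cycle_through_ngon_vertices:
  fixes V :: "nat \<Rightarrow> 'a"
  assumes C: "connected_graph E" and G: "is_graph E"
    and d: "0 < d" "d \<le> 1 / 8" and lam: "8 \<le> lam" "2 \<le> d * lam"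
    and n: "3 \<le> n" "48 \<le> real n * d" and Vn: "V n = V 0"
    and V_lower: "\<And>i j. i < n \<Longrightarrow> j < n \<Longrightarrow>
      lam / (1 + d) * cyc_dist n i j - 2 \<le> gdist E (V i) (V j)"
    and V_upper: "\<And>i j. i < n \<Longrightarrow> j < n \<Longrightarrow>
      gdist E (V i) (V j) \<le> (1 + d) * (lam * cyc_dist n i j) + 2"
  shows "\<exists>N w. almost_isometric_cycle E (1 + 8 * d) N w \<and> real n * (lam / (1 + d) - 2) \<le> N"
proof -
  have "lam / 2 \<le> lam / (1 + d)" using d lam by (intro divide_left_mono) auto
  then have lam2: "2 \<le> lam / (1 + d) - 2" using lam by linarith
  define ll where "ll i = walk_dist E (V i) (V (Suc i))" for i
  have ll: "lam / (1 + d) - 2 \<le> ll i" "ll i \<le> (1 + d) * lam + 2" if "i < n" for i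
  proof -
    have "V (Suc i) = V (Suc i mod n)" "Suc i mod n < n" "cyc_dist n i (Suc i mod n) = 1"
      using that n(1) Vn by (auto simp: cyc_dist_def mod_Suc of_nat_diff)
    then show "lam / (1 + d) - 2 \<le> ll i" "ll i \<le> (1 + d) * lam + 2"
      using V_lower[OF that, of "Suc i mod n"] V_upper[OF that, of "Suc i mod n"]
      unfolding ll_def gdist_eq_walk_dist by simp_all
  qed
  define N where "N = (\<Sum>i<n. ll i)"
  have "\<exists>W. is_walk E (ll i) W \<and> W 0 = V i \<and> W (ll i) = V (Suc i)" for i
    unfolding ll_def by (rule shortest_walk_exists[OF C])
  then obtain w where w: "is_walk E N w" "w 0 = V 0" "w N = V n"
    and near: "\<forall>i<n. \<forall>t\<le>ll i. gdist E (V i) (w ((\<Sum>m<i. ll m) + t)) \<le> t"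
    using walk_concat[where n = n and ll = ll and V = V] unfolding N_def by blast
  have cw: "closed_walk E N w" using w Vn by (simp add: closed_walk_def)
  define b where "b = Max (ll ` {..<n})"
  have "b \<in> ll ` {..<n}"
    unfolding b_def using n(1) by (intro Max_in) (auto simp: lessThan_empty_iff)
  then obtain i where i: "i < n" "b = ll i" by auto
  have "2 \<le> real (ll i)" using ll(1)[OF i(1)] lam2 by linarith
  then have b: "1 \<le> real b" "real b \<le> (1 + d) * lam + 2" using ll(2)[OF i(1)] i(2) by simp_all
  have ll_b: "ll i \<le> b" if "i < n" for i unfolding b_def using that by (intro Max_ge) auto
  have N_lower: "real n * (lam / (1 + d) - 2) \<le> N"
    using sum_bounded_below[of "{..<n}" "lam / (1 + d) - 2" "\<lambda>i. real (ll i)"] ll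
    unfolding N_def by simp
  have "1 / (1 + 8 * d) * (real N / 2) \<le> gpdist E (cycle_point w p) (cycle_point w (antipode N p))"
    if "0 \<le> p" "p < N" for p :: real
  proof -
    have "1 / (1 + 8 * d) * (real N / 2) = real N / (2 * (1 + 8 * d))" by simp
    also have "\<dots> \<le> lam / (1 + d) * ((real N / 2 - 1) / b - 1) - 4 - 2 * real b"
      by (rule antipodal_margin[OF d lam b N_lower n(2)])
    also have "\<dots> \<le> gpdist E (cycle_point w p) (cycle_point w (antipode N p))"
      using near b(1) d lam
      by (intro concatenated_cycle_antipodal_gpdist_ge[OF C G N_def cw _ ll_b _ V_lower _ that])
        auto
    finally show ?thesis .
  qed
  then show ?thesis
    using cw N_lower unfolding almost_isometric_cycle_def by (intro exI[of _ N] exI[of _ w]) simp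
qed

lemma long_almost_isometric_cycle_if_approximates_ngons:
  assumes C: "connected_graph E" and G: "is_graph E" and ap: "approximates_ngons E"
    and r: "1 < r" "r \<le> 2"
  shows "\<exists>N w. almost_isometric_cycle E r N w \<and> B < N"
proof -
  define d where "d = (r - 1) / 8"
  have d: "0 < d" "d \<le> 1 / 8" "r = 1 + 8 * d" using r unfolding d_def by (auto simp: field_simps)
  define n where "n = nat \<lceil>48 / d\<rceil> + 3"
  have n: "3 \<le> n" "48 \<le> real n * d"
  proof -
    have "48 / d \<le> real n" unfolding n_def by linarith
    then show "48 \<le> real n * d" using d by (simp add: divide_le_eq)
  qed (simp add: n_def)
  obtain lam and f :: "nat \<Rightarrow> 'a gpoint" where lam: "8 + 2 / d + 4 * real B < lam"
    and f: "\<forall>i<n. f i \<in> gpoints E"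
    and bil: "\<forall>i<n. \<forall>j<n. 1 / (1 + d) * (lam * cyc_dist n i j) \<le> gpdist E (f i) (f j) \<and>
                gpdist E (f i) (f j) \<le> (1 + d) * (lam * cyc_dist n i j)"
    using ap[unfolded approximates_ngons_def, rule_format,
        where K = "1 + d" and n = n and L = "8 + 2 / d + 4 * real B"] d(1)
    by auto
  have lam8: "8 \<le> lam" "2 \<le> d * lam" "4 * real B < lam"
  proof -
    have "0 \<le> 2 / d" using d by simp
    then show "8 \<le> lam" "4 * real B < lam" using lam by linarith+
    have "2 / d < lam" using lam by simp
    then show "2 \<le> d * lam" using d by (simp add: divide_less_eq mult.commute)
  qed
  define V where "V i = fst (f (i mod n))" for i
  have V: "lam / (1 + d) * cyc_dist n i j - 2 \<le> gdist E (V i) (V j)"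
    "gdist E (V i) (V j) \<le> (1 + d) * (lam * cyc_dist n i j) + 2" if "i < n" "j < n" for i j
    using bilipschitz_points_base_vertices[OF C G, of "f i" "f j" "1 + d" "lam * cyc_dist n i j"]
      f bil that unfolding V_def by simp_all
  have "V n = V 0" by (simp add: V_def)
  then obtain N w where aic: "almost_isometric_cycle E r N w"
    and N_lower: "real n * (lam / (1 + d) - 2) \<le> N"
    using almost_isometric_cycle_through_ngon_vertices[OF C G d(1,2) lam8(1,2) n, of V] V d(3)
    by blast
  have "lam / 2 \<le> lam / (1 + d)" using d lam8 by (intro divide_left_mono) auto
  then have "lam / 2 - 2 \<le> lam / (1 + d) - 2" "0 \<le> lam / (1 + d) - 2" using lam8 by linarith+
  moreover have "lam / (1 + d) - 2 \<le> real n * (lam / (1 + d) - 2)"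
    using mult_right_mono[of 1 "real n" "lam / (1 + d) - 2"] n(1) \<open>0 \<le> lam / (1 + d) - 2\<close>
    by simp
  ultimately have "real B < real N" using N_lower lam8 by linarith
  then show ?thesis using aic by auto
qed

theorem corollary3p6:
  fixes E :: "'a \<Rightarrow> 'a \<Rightarrow> bool"
  assumes "is_graph E" and "connected_graph E"
  shows "strongly_shortcut_graph E \<longleftrightarrow> \<not> approximates_ngons E"
proof
  assume "strongly_shortcut_graph E"
  then obtain K B where K: "1 < K" and bounded: "\<forall>n w. almost_isometric_cycle E K n w \<longrightarrow> n \<le> B"
    unfolding strongly_shortcut_graph_def by blast
  show "\<not> approximates_ngons E"
  proof
    assume "approximates_ngons E"
    then obtain N w where "almost_isometric_cycle E (min K 2) N w" "B < N"
      using long_almost_isometric_cycle_if_approximates_ngons[OF assms(2,1), of "min K 2" B] K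
      by auto
    then have "almost_isometric_cycle E K N w" "B < N"
      using almost_isometric_cycle_mono[of E "min K 2" N w K] K by auto
    then show False using bounded by auto
  qed
next
  assume "\<not> approximates_ngons E"
  then show "strongly_shortcut_graph E"
    using approximates_ngons_if_not_strongly_shortcut[OF assms(2,1)] by blast
qed

end
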